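(* Let $k\ge 2$, $n\ge1$ be integers, let $\bar{\mathcal{P}}\in\mathbb{R}^{[k,n]}$ be a columnwise-substochastic tensor, $\mathbf{v}\in\mathbb{R}^n$ a stochastic vector and $\alpha\in[0,1)$. Let $\Delta:=\{\mathbf{y}\in\mathbb{R}^n_+:\mathbf{e}^T\mathbf{y}\le(1-\alpha)^{-\frac{1}{k-1}}\}$ and let $\mathbf{y}_*\in\Delta$. Then $\mathbf{y}_*$ solves the MLPPR system $(\mathbf{e}^T\mathbf{y})^{k-2}\mathbf{y}-\alpha\bar{\mathcal{P}}\mathbf{y}^{k-1}=\mathbf{v}$ if and only if $\mathbf{y}_*$ is a fixed point of the continuous map $$\Phi(\mathbf{y}):=\left(1+\alpha\mathbf{e}^T(\bar{\mathcal{P}}\mathbf{y}^{k-1})\right)^{-\frac{k-2}{k-1}}\left(\mathbf{v}+\alpha\bar{\mathcal{P}}\mathbf{y}^{k-1}\right).$$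
   Context: For $\mathcal{P}\in\mathbb{R}^{[k,n]}$ (real tensors of order $k$, dimension $n$) and $\mathbf{y}\in\mathbb{R}^n$, $(\mathcal{P}\mathbf{y}^{k-1})_i=\sum_{i_2,\dots,i_k}p_{i i_2\dots i_k}y_{i_2}\cdots y_{i_k}$. $\bar{\mathcal{P}}$ is columnwise-substochastic if its entries are nonnegative and $\sum_{i}\bar p_{i i_2\dots i_k}\le1$ for all $i_2,\dots,i_k$. $\mathbf{e}$ is the all-ones vector; a stochastic vector is nonnegative with entries summing to $1$. The MLPPR system $(I\circ\mathbf{e}^{\circ(k-2)}-\alpha\bar{\mathcal{P}})\mathbf{y}^{k-1}=\mathbf{v}$ is exactly $(\mathbf{e}^T\mathbf{y})^{k-2}\mathbf{y}-\alpha\bar{\mathcal{P}}\mathbf{y}^{k-1}=\mathbf{v}$. *)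

theory Defs
  imports Complex_Main
begin

text \<open>Indices are 0,...,n-1. Vectors in R^n are functions nat => real (only the values
  at indices < n matter). A tensor of order k and dimension n is a function on index lists
  [i1, i2, ..., ik] with all entries < n.\<close>

definition multi_idx :: "nat \<Rightarrow> nat \<Rightarrow> nat list set" where
  "multi_idx m n = {js. length js = m \<and> set js \<subseteq> {..<n}}"

text \<open>(P y^(k-1))_i = sum over i2..ik of p_{i i2 .. ik} y_{i2} ... y_{ik}\<close>
definition tensor_apply :: "nat \<Rightarrow> nat \<Rightarrow> (nat list \<Rightarrow> real) \<Rightarrow> (nat \<Rightarrow> real) \<Rightarrow> nat \<Rightarrow> real" where
  "tensor_apply k n P y i = (\<Sum>js\<in>multi_idx (k - 1) n. P (i # js) * prod_list (map y js))"

definition col_substochastic :: "nat \<Rightarrow> nat \<Rightarrow> (nat list \<Rightarrow> real) \<Rightarrow> bool" where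
  "col_substochastic k n P \<longleftrightarrow>
     (\<forall>is\<in>multi_idx k n. 0 \<le> P is) \<and>
     (\<forall>js\<in>multi_idx (k - 1) n. (\<Sum>i<n. P (i # js)) \<le> 1)"

definition stochastic_vec :: "nat \<Rightarrow> (nat \<Rightarrow> real) \<Rightarrow> bool" where
  "stochastic_vec n v \<longleftrightarrow> (\<forall>i<n. 0 \<le> v i) \<and> (\<Sum>i<n. v i) = 1"

definition Delta_set :: "nat \<Rightarrow> nat \<Rightarrow> real \<Rightarrow> (nat \<Rightarrow> real) set" where
  "Delta_set k n \<alpha> = {y. (\<forall>i<n. 0 \<le> y i) \<and> (\<Sum>i<n. y i) \<le> (1 - \<alpha>) powr (- 1 / (real k - 1))}"

definition solves_MLPPR :: "nat \<Rightarrow> nat \<Rightarrow> (nat list \<Rightarrow> real) \<Rightarrow> real \<Rightarrow> (nat \<Rightarrow> real) \<Rightarrow> (nat \<Rightarrow> real) \<Rightarrow> bool" where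
  "solves_MLPPR k n P \<alpha> v y \<longleftrightarrow>
     (\<forall>i<n. (\<Sum>j<n. y j) ^ (k - 2) * y i - \<alpha> * tensor_apply k n P y i = v i)"

definition Phi :: "nat \<Rightarrow> nat \<Rightarrow> (nat list \<Rightarrow> real) \<Rightarrow> real \<Rightarrow> (nat \<Rightarrow> real) \<Rightarrow> (nat \<Rightarrow> real) \<Rightarrow> nat \<Rightarrow> real" where
  "Phi k n P \<alpha> v y i =
     (1 + \<alpha> * (\<Sum>j<n. tensor_apply k n P y j)) powr (- (real k - 2) / (real k - 1))
       * (v i + \<alpha> * tensor_apply k n P y i)"

end

theory Submission
  imports Defs
begin

text \<open>Write w = v + \<alpha> P y^(k-1). Since v is stochastic and P, y are nonnegative, the
  entries of w sum to A = 1 + \<alpha> e^T(P y^(k-1)) > 0, and both conditions say that y is a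
  positive multiple of w. Summing the MLPPR system gives (e^T y)^(k-1) = A, i.e. the scale
  is fixed to e^T y = A^(1/(k-1)); the fixed point equation y = A^(-(k-2)/(k-1)) w encodes
  exactly the same scale.\<close>

lemma powr_scaled_root:
  fixes A :: real and m :: nat
  assumes "0 < A"
  shows "A powr (- real m / (real m + 1)) * A = root (Suc m) A"
proof -
  have "A powr (- real m / (real m + 1)) * A = A powr (- real m / (real m + 1) + 1)"
    using assms by (simp only: powr_add powr_one)
  also have "- real m / (real m + 1) + 1 = 1 / real (Suc m)"
    by (simp add: field_simps)
  finally show ?thesis using assms by (simp add: root_powr_inverse)
qed

lemma homogeneous_eq_iff_normalized_eq:
  fixes y w :: "'a \<Rightarrow> real" and I :: "'a set" and m :: nat
  assumes y_nonneg: "\<forall>i\<in>I. 0 \<le> y i" and w_pos: "0 < sum w I"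
  shows "(\<forall>i\<in>I. sum y I ^ m * y i = w i) \<longleftrightarrow>
         (\<forall>i\<in>I. y i = sum w I powr (- real m / (real m + 1)) * w i)"
proof -
  define A s c where "A = sum w I" and "s = sum y I"
    and "c = A powr (- real m / (real m + 1))"
  define r where "r = root (Suc m) A"
  have A_pos: "0 < A" using w_pos by (simp add: A_def)
  have cA: "c * A = r" unfolding c_def r_def using powr_scaled_root[OF A_pos] .
  have r_pow: "r ^ Suc m = A" unfolding r_def using A_pos by (intro real_root_pow_pos2) auto
  have rc: "r ^ m * c = 1"
  proof -
    have "(r ^ m * c) * A = r ^ Suc m" using cA by (simp add: mult.assoc)
    also have "\<dots> = A" by (fact r_pow)
    finally have "(r ^ m * c) * A = A" .
    then show ?thesis using A_pos by simp
  qed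
  show ?thesis unfolding A_def[symmetric] s_def[symmetric] c_def[symmetric]
  proof
    assume eq: "\<forall>i\<in>I. s ^ m * y i = w i"
    have "s ^ Suc m = s ^ m * sum y I" unfolding s_def by (rule power_Suc2)
    also have "\<dots> = (\<Sum>i\<in>I. s ^ m * y i)" by (rule sum_distrib_left)
    also have "\<dots> = A" using eq by (simp add: A_def)
    finally have "s ^ Suc m = A" .
    moreover have "0 \<le> s" unfolding s_def using y_nonneg by (simp add: sum_nonneg)
    ultimately have "s = r" unfolding r_def by (simp add: real_root_pos_unique)
    show "\<forall>i\<in>I. y i = c * w i"
    proof
      fix i assume "i \<in> I"
      have "y i = (r ^ m * c) * y i" using rc by simp
      also have "\<dots> = c * (s ^ m * y i)" using \<open>s = r\<close> by simp
      finally show "y i = c * w i" using eq \<open>i \<in> I\<close> by simp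
    qed
  next
    assume eq: "\<forall>i\<in>I. y i = c * w i"
    have "s = r" using eq cA by (simp add: A_def s_def sum_distrib_left)
    show "\<forall>i\<in>I. s ^ m * y i = w i"
    proof
      fix i assume "i \<in> I"
      have "s ^ m * y i = (r ^ m * c) * w i" using eq \<open>i \<in> I\<close> \<open>s = r\<close> by simp
      then show "s ^ m * y i = w i" using rc by simp
    qed
  qed
qed

lemma tensor_apply_nonneg:
  assumes "0 < k" "col_substochastic k n P" "\<forall>i<n. 0 \<le> y i" "i < n"
  shows "0 \<le> tensor_apply k n P y i"
  unfolding tensor_apply_def
proof (rule sum_nonneg)
  fix js assume js: "js \<in> multi_idx (k - 1) n"
  then have "i # js \<in> multi_idx k n" using assms by (auto simp: multi_idx_def)
  then have "0 \<le> P (i # js)" using assms(2) by (auto simp: col_substochastic_def)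
  moreover have "0 \<le> prod_list (map y js)"
    using js assms(3) by (force simp: multi_idx_def intro!: prod_list_nonneg)
  ultimately show "0 \<le> P (i # js) * prod_list (map y js)" by simp
qed

theorem lemma3p5:
  fixes k n :: nat and P :: "nat list \<Rightarrow> real" and v y :: "nat \<Rightarrow> real" and \<alpha> :: real
  assumes "k \<ge> 2" and "n \<ge> 1"
    and "col_substochastic k n P"
    and "stochastic_vec n v"
    and "0 \<le> \<alpha>" and "\<alpha> < 1"
    and "y \<in> Delta_set k n \<alpha>"
  shows "solves_MLPPR k n P \<alpha> v y \<longleftrightarrow> (\<forall>i<n. Phi k n P \<alpha> v y i = y i)"
proof -
  define w where "w i = v i + \<alpha> * tensor_apply k n P y i" for i
  have y_nonneg: "\<forall>i\<in>{..<n}. 0 \<le> y i" using assms(7) by (simp add: Delta_set_def)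
  have sum_w: "sum w {..<n} = 1 + \<alpha> * (\<Sum>j<n. tensor_apply k n P y j)"
    using assms(4) by (simp add: w_def stochastic_vec_def sum.distrib sum_distrib_left)
  have "0 \<le> (\<Sum>j<n. tensor_apply k n P y j)"
    using tensor_apply_nonneg[OF _ assms(3)] assms(1) y_nonneg by (intro sum_nonneg) auto
  then have "0 < sum w {..<n}" using sum_w assms(5) by (simp add: add_pos_nonneg)
  from homogeneous_eq_iff_normalized_eq[OF y_nonneg this, where m = "k - 2"]
  have "(\<forall>i<n. (\<Sum>j<n. y j) ^ (k - 2) * y i = w i) \<longleftrightarrow>
        (\<forall>i<n. y i = (1 + \<alpha> * (\<Sum>j<n. tensor_apply k n P y j))
                          powr (- (real k - 2) / (real k - 1)) * w i)"
    using assms(1) sum_w by (simp add: of_nat_diff Ball_def)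
  then show ?thesis
    by (simp add: solves_MLPPR_def Phi_def w_def algebra_simps eq_commute[of "y _"])
qed

end
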